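(* Let $(M,\varphi,\xi,\eta,g)$ be an almost contact B-metric manifold and let $(M,\varphi,\bar\xi,\bar\eta,\bar g)$ be its image under any general contactly conformal transformation. Then the Nijenhuis tensors $N$ and $\bar N$ of $(\varphi,\xi,\eta)$ and $(\varphi,\bar\xi,\bar\eta)$ satisfy $\bar N(\varphi x,\varphi y)=N(\varphi x,\varphi y)$ for all vector fields $x,y$; i.e. $N(\varphi\cdot,\varphi\cdot)$ is an invariant of the group of general contactly conformal transformations.
   Context: An almost contact B-metric manifold $(M,\varphi,\xi,\eta,g)$ is a $(2n+1)$-dimensional smooth manifold with a $(1,1)$-tensor $\varphi$, vector field $\xi$, 1-form $\eta$, and pseudo-Riemannian metric $g$ of signature $(n,n+1)$ with $\varphi\xi=0$, $\varphi^2=-\mathrm{Id}+\eta\otimes\xi$, $\eta\circ\varphi=0$, $\eta(\xi)=1$, $g(\varphi x,\varphi y)=-g(x,y)+\eta(x)\eta(y)$. The Nijenhuis tensor of $(\varphi,\xi,\eta)$ is $N(x,y)=[\varphi x,\varphi y]+\varphi^2[x,y]-\varphi[\varphi x,y]-\varphi[x,\varphi y]+d\eta(x,y)\xi$, $d\eta(x,y)=x(\eta(y))-y(\eta(x))-\eta([x,y])$. A general contactly conformal transformation, determined by smooth functions $u,v,w$ on $M$, keeps $\varphi$ and sets $\bar\xi=e^{-w}\xi$, $\bar\eta=e^{w}\eta$, $\bar g(x,y)=\alpha g(x,y)+\beta g(x,\varphi y)+(\gamma-\alpha)\eta(x)\eta(y)$ with $\alpha=e^{2u}\cos 2v$, $\beta=e^{2u}\sin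 2v$, $\gamma=e^{2w}$; these transformations form a group $G$, and $(M,\varphi,\bar\xi,\bar\eta,\bar g)$ is again an almost contact B-metric manifold. *)

theory Defs
  imports Complex_Main
begin

text \<open>Algebraic model of a smooth manifold M: points of type 'm, a distinguished
algebra C of smooth real functions on M, and vector fields realised as
derivations of C (extended by 0 outside C).\<close>

type_synonym 'm fn = "'m \<Rightarrow> real"
type_synonym 'm vf = "'m fn \<Rightarrow> 'm fn"

definition smooth_algebra :: "'m fn set \<Rightarrow> bool" where
  "smooth_algebra C \<longleftrightarrow>
     (\<forall>c. (\<lambda>_. c) \<in> C) \<and>
     (\<forall>f\<in>C. \<forall>h\<in>C. (\<lambda>p. f p + h p) \<in> C \<and> (\<lambda>p. f p * h p) \<in> C) \<and>
     (\<forall>f\<in>C. (\<lambda>p. - f p) \<in> C \<and> (\<lambda>p. exp (f p)) \<in> C \<and>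
              (\<lambda>p. sin (f p)) \<in> C \<and> (\<lambda>p. cos (f p)) \<in> C)"

definition derivation :: "'m fn set \<Rightarrow> 'm vf \<Rightarrow> bool" where
  "derivation C X \<longleftrightarrow>
     (\<forall>h. h \<notin> C \<longrightarrow> X h = (\<lambda>_. 0)) \<and>
     (\<forall>h\<in>C. X h \<in> C) \<and>
     (\<forall>h\<in>C. \<forall>k\<in>C. X (\<lambda>p. h p + k p) = (\<lambda>p. X h p + X k p)) \<and>
     (\<forall>c. \<forall>h\<in>C. X (\<lambda>p. c * h p) = (\<lambda>p. c * X h p)) \<and>
     (\<forall>h\<in>C. \<forall>k\<in>C. X (\<lambda>p. h p * k p) = (\<lambda>p. h p * X k p + k p * X h p))"

definition VF :: "'m fn set \<Rightarrow> 'm vf set" where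
  "VF C = {X. derivation C X}"

definition vzero :: "'m vf" where "vzero = (\<lambda>h p. 0)"
definition vadd :: "'m vf \<Rightarrow> 'm vf \<Rightarrow> 'm vf" where
  "vadd X Y = (\<lambda>h p. X h p + Y h p)"
definition vneg :: "'m vf \<Rightarrow> 'm vf" where
  "vneg X = (\<lambda>h p. - X h p)"
definition fmult :: "'m fn \<Rightarrow> 'm vf \<Rightarrow> 'm vf" where
  "fmult f X = (\<lambda>h p. f p * X h p)"
definition bracket :: "'m vf \<Rightarrow> 'm vf \<Rightarrow> 'm vf" where
  "bracket X Y = (\<lambda>h p. X (Y h) p - Y (X h) p)"

definition tensor11 :: "'m fn set \<Rightarrow> ('m vf \<Rightarrow> 'm vf) \<Rightarrow> bool" where
  "tensor11 C \<phi> \<longleftrightarrow> (\<forall>X\<in>VF C. \<phi> X \<in> VF C) \<and>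
     (\<forall>X\<in>VF C. \<forall>Y\<in>VF C. \<phi> (vadd X Y) = vadd (\<phi> X) (\<phi> Y)) \<and>
     (\<forall>f\<in>C. \<forall>X\<in>VF C. \<phi> (fmult f X) = fmult f (\<phi> X))"

definition oneform :: "'m fn set \<Rightarrow> ('m vf \<Rightarrow> 'm fn) \<Rightarrow> bool" where
  "oneform C \<eta> \<longleftrightarrow> (\<forall>X\<in>VF C. \<eta> X \<in> C) \<and>
     (\<forall>X\<in>VF C. \<forall>Y\<in>VF C. \<eta> (vadd X Y) = (\<lambda>p. \<eta> X p + \<eta> Y p)) \<and>
     (\<forall>f\<in>C. \<forall>X\<in>VF C. \<eta> (fmult f X) = (\<lambda>p. f p * \<eta> X p))"

definition sym_tensor02 :: "'m fn set \<Rightarrow> ('m vf \<Rightarrow> 'm vf \<Rightarrow> 'm fn) \<Rightarrow> bool" where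
  "sym_tensor02 C g \<longleftrightarrow> (\<forall>X\<in>VF C. \<forall>Y\<in>VF C. g X Y \<in> C \<and> g X Y = g Y X) \<and>
     (\<forall>X\<in>VF C. \<forall>Y\<in>VF C. \<forall>Z\<in>VF C. g (vadd X Y) Z = (\<lambda>p. g X Z p + g Y Z p)) \<and>
     (\<forall>f\<in>C. \<forall>X\<in>VF C. \<forall>Y\<in>VF C. g (fmult f X) Y = (\<lambda>p. f p * g X Y p))"

definition acBm ::
  "'m fn set \<Rightarrow> ('m vf \<Rightarrow> 'm vf) \<Rightarrow> 'm vf \<Rightarrow> ('m vf \<Rightarrow> 'm fn)
     \<Rightarrow> ('m vf \<Rightarrow> 'm vf \<Rightarrow> 'm fn) \<Rightarrow> bool" where
  "acBm C \<phi> \<xi> \<eta> g \<longleftrightarrow>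
     tensor11 C \<phi> \<and> \<xi> \<in> VF C \<and> oneform C \<eta> \<and> sym_tensor02 C g \<and>
     \<phi> \<xi> = vzero \<and>
     (\<forall>X\<in>VF C. \<phi> (\<phi> X) = vadd (vneg X) (fmult (\<eta> X) \<xi>)) \<and>
     (\<forall>X\<in>VF C. \<eta> (\<phi> X) = (\<lambda>_. 0)) \<and>
     \<eta> \<xi> = (\<lambda>_. 1) \<and>
     (\<forall>X\<in>VF C. \<forall>Y\<in>VF C. g (\<phi> X) (\<phi> Y) = (\<lambda>p. - g X Y p + \<eta> X p * \<eta> Y p))"

definition d1 :: "('m vf \<Rightarrow> 'm fn) \<Rightarrow> 'm vf \<Rightarrow> 'm vf \<Rightarrow> 'm fn" where
  "d1 \<eta> X Y = (\<lambda>p. X (\<eta> Y) p - Y (\<eta> X) p - \<eta> (bracket X Y) p)"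

definition nijenhuis ::
  "('m vf \<Rightarrow> 'm vf) \<Rightarrow> 'm vf \<Rightarrow> ('m vf \<Rightarrow> 'm fn) \<Rightarrow> 'm vf \<Rightarrow> 'm vf \<Rightarrow> 'm vf" where
  "nijenhuis \<phi> \<xi> \<eta> X Y = (\<lambda>h p.
      bracket (\<phi> X) (\<phi> Y) h p + \<phi> (\<phi> (bracket X Y)) h p
    - \<phi> (bracket (\<phi> X) Y) h p - \<phi> (bracket X (\<phi> Y)) h p
    + d1 \<eta> X Y p * \<xi> h p)"

text \<open>General contactly conformal transformation determined by u, v, w:
  returns (xi-bar, eta-bar, g-bar); phi is unchanged.\<close>
definition gcc_transform ::
  "'m fn \<Rightarrow> 'm fn \<Rightarrow> 'm fn \<Rightarrow> ('m vf \<Rightarrow> 'm vf) \<Rightarrow> 'm vf \<Rightarrow> ('m vf \<Rightarrow> 'm fn)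
     \<Rightarrow> ('m vf \<Rightarrow> 'm vf \<Rightarrow> 'm fn)
     \<Rightarrow> 'm vf \<times> ('m vf \<Rightarrow> 'm fn) \<times> ('m vf \<Rightarrow> 'm vf \<Rightarrow> 'm fn)" where
  "gcc_transform u v w \<phi> \<xi> \<eta> g =
    (let \<alpha> = (\<lambda>p. exp (2 * u p) * cos (2 * v p));
         \<beta> = (\<lambda>p. exp (2 * u p) * sin (2 * v p));
         \<gamma> = (\<lambda>p. exp (2 * w p))
     in (fmult (\<lambda>p. exp (- w p)) \<xi>,
         (\<lambda>X p. exp (w p) * \<eta> X p),
         (\<lambda>X Y p. \<alpha> p * g X Y p + \<beta> p * g X (\<phi> Y) p
                  + (\<gamma> p - \<alpha> p) * \<eta> X p * \<eta> Y p)))"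

end

theory Submission
  imports Defs
begin

text \<open>Only the term \<open>d\<eta>(x,y) \<xi>\<close> of the Nijenhuis tensor involves \<open>\<xi>\<close> and \<open>\<eta>\<close>.
  On the kernel of \<open>\<eta>\<close> the 2-form \<open>d\<eta>\<close> reduces to \<open>-\<eta>([x,y])\<close>, which is
  \<open>C\<close>-linear in \<open>\<eta>\<close>; so rescaling \<open>\<eta>\<close> by \<open>e\<^sup>w\<close> and \<open>\<xi>\<close> by \<open>e\<^sup>-\<^sup>w\<close> leaves that
  term unchanged on arguments \<open>\<phi>x, \<phi>y\<close>, which lie in the kernel of \<open>\<eta>\<close>.\<close>

lemma derivation_zero:
  assumes "derivation C Z"
  shows "Z (\<lambda>_. 0) = (\<lambda>_. 0)"
proof (cases "(\<lambda>_. 0::real) \<in> C")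
  case True
  with assms have "Z (\<lambda>p. 0 * (\<lambda>_. 0::real) p) = (\<lambda>p. 0 * Z (\<lambda>_. 0) p)"
    unfolding derivation_def by (simp only: Ball_def)
  then show ?thesis by simp
next
  case False
  with assms show ?thesis unfolding derivation_def by blast
qed

lemma d1_on_kernel:
  assumes "derivation C X" "derivation C Y"
    and "\<eta> X = (\<lambda>_. 0)" "\<eta> Y = (\<lambda>_. 0)"
  shows "d1 \<eta> X Y = (\<lambda>p. - \<eta> (bracket X Y) p)"
  using assms by (simp add: d1_def derivation_zero)

lemma nijenhuis_rescale_on_kernel:
  assumes "derivation C X" "derivation C Y"
    and "\<eta> X = (\<lambda>_. 0)" "\<eta> Y = (\<lambda>_. 0)"
    and "\<And>p. f p \<noteq> 0"
  shows "nijenhuis \<phi> (fmult (\<lambda>p. inverse (f p)) \<xi>) (\<lambda>Z p. f p * \<eta> Z p) X Y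
       = nijenhuis \<phi> \<xi> \<eta> X Y"
proof -
  have d1_rescaled: "d1 (\<lambda>Z p. f p * \<eta> Z p) X Y = (\<lambda>p. f p * d1 \<eta> X Y p)"
    using d1_on_kernel[OF assms(1,2)] assms(3,4) by simp
  have cancel: "\<And>p a b. f p * a * (inverse (f p) * b) = a * b"
    using assms(5) by simp
  show ?thesis
    unfolding nijenhuis_def fmult_def d1_rescaled cancel ..
qed

theorem theorem3p1:
  fixes C :: "'m fn set" and \<phi> :: "'m vf \<Rightarrow> 'm vf" and \<xi> :: "'m vf"
    and \<eta> :: "'m vf \<Rightarrow> 'm fn" and g :: "'m vf \<Rightarrow> 'm vf \<Rightarrow> 'm fn"
    and u v w :: "'m fn"
  assumes "smooth_algebra C"
    and "acBm C \<phi> \<xi> \<eta> g"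
    and "u \<in> C" and "v \<in> C" and "w \<in> C"
    and "gcc_transform u v w \<phi> \<xi> \<eta> g = (\<xi>', \<eta>', g')"
    and "X \<in> VF C" and "Y \<in> VF C"
  shows "nijenhuis \<phi> \<xi>' \<eta>' (\<phi> X) (\<phi> Y) = nijenhuis \<phi> \<xi> \<eta> (\<phi> X) (\<phi> Y)"
proof -
  have \<xi>': "\<xi>' = fmult (\<lambda>p. inverse (exp (w p))) \<xi>"
    and \<eta>': "\<eta>' = (\<lambda>Z p. exp (w p) * \<eta> Z p)"
    using assms(6) by (auto simp: gcc_transform_def Let_def exp_minus)
  have "tensor11 C \<phi>" and \<eta>_\<phi>: "\<forall>Z\<in>VF C. \<eta> (\<phi> Z) = (\<lambda>_. 0)"
    using assms(2) unfolding acBm_def by blast+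
  then have "\<phi> X \<in> VF C" "\<phi> Y \<in> VF C"
    using assms(7,8) unfolding tensor11_def by blast+
  then have "derivation C (\<phi> X)" "derivation C (\<phi> Y)"
    unfolding VF_def by simp_all
  moreover have "\<eta> (\<phi> X) = (\<lambda>_. 0)" "\<eta> (\<phi> Y) = (\<lambda>_. 0)"
    using \<eta>_\<phi> assms(7,8) by auto
  ultimately show ?thesis
    unfolding \<xi>' \<eta>'
    by (rule nijenhuis_rescale_on_kernel[where \<eta> = \<eta> and f = "\<lambda>p. exp (w p)"]) simp_all
qed

end
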